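(* Let $R=\bigoplus_{s\in S}R_s$ be an $S$-graded ring inducing $S$ which is graded von Neumann regular. Then: (i) every homogeneous right (resp. left) ideal $I$ of $R$ satisfies $I^2=I$; (ii) every homogeneous two-sided ideal of $R$ is graded semiprime. If moreover $R$ is nearly epsilon-strongly graded, then: (iii) the graded Jacobson radical $J^g(R)$ is zero.
   Context: Rings are associative, not necessarily unital. $S$-graded ring inducing $S$: $S$ a partial groupoid, $R=\bigoplus_{s\in S}R_s$, $R_sR_t\subseteq R_{st}$ when $st$ defined, $R_sR_t\ne0$ implies $st$ defined. Convention: $0\in S$, $R_0=0$, $S\setminus\{0\}=\{s:R_s\ne0\}$, undefined products set to $0$, $0$ absorbing. $H_R=\bigcup_sR_s$. An ideal $J$ is homogeneous if $J=\bigoplus_s(J\cap R_s)$. A homogeneous two-sided ideal $P$ is graded semiprime if for every homogeneous two-sided ideal $I$ and positive integer $n$, $I^n\subseteq P$ implies $I\subseteq P$. $R$ is graded von Neumann regular if $x\in xRx$ for all $x\in H_R$. $S$ cancellative: $0\ne su=tu$ or $0\ne us=ut$ implies $s=t$. (LRI): for every $s$ there exist $s^{-1}$ and idempotents $e,f$ with $es=sf=s$, $fs^{-1}=s^{-1}e=s^{-1}$, $ss^{-1}=e$, $s^{-1}s=f$. $R$ is nearly epsilon-strongly graded if $S$ is cancellative, satisfies (LRI), and for every $s$ and $x\in R_s$ there exist $\epsilon(x)\in R_sR_{s^{-1}}$, $\epsilon'(x)\in R_{s^{-1}}R_s$ (additive subgroups generated by products) with $\epsilon(x)x=x=x\epsilon'(x)$.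 Graded Jacobson radical (for cancellative $S$): a homogeneous right ideal $M$ is graded modular if there is $u\in H_R$ with $ux-x\in M$ for all $x\in H_R$; a graded maximal modular right ideal is a graded modular right ideal that is maximal among proper homogeneous right ideals; $J^g(R)$ is the intersection of all graded maximal modular right ideals (equal to $R$ if there are none). *)

theory Defs
  imports Main
begin

text \<open>The ring R is the whole carrier of a type of class ring (associative,
 not necessarily unital). The partial groupoid S is the whole type 's, with a
 total multiplication smul in which the distinguished element z plays the role
 of 0 (undefined products are z, z absorbing).\<close>

inductive_set add_gen :: "'a::ring set \<Rightarrow> 'a set" for X where
  zero: "0 \<in> add_gen X"
| base: "x \<in> X \<Longrightarrow> x \<in> add_gen X"
| diff: "a \<in> add_gen X \<Longrightarrow> b \<in> add_gen X \<Longrightarrow> a - b \<in> add_gen X"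

definition setmul :: "'a::ring set \<Rightarrow> 'a set \<Rightarrow> 'a set" where
  "setmul A B = add_gen {a * b | a b. a \<in> A \<and> b \<in> B}"

text \<open>Powers I^n for n \<ge> 1 (the value at 0 is irrelevant).\<close>
fun ideal_pow :: "'a::ring set \<Rightarrow> nat \<Rightarrow> 'a set" where
  "ideal_pow I 0 = UNIV"
| "ideal_pow I (Suc 0) = I"
| "ideal_pow I (Suc (Suc n)) = setmul (ideal_pow I (Suc n)) I"

definition add_subgroup :: "'a::ring set \<Rightarrow> bool" where
  "add_subgroup A \<longleftrightarrow> 0 \<in> A \<and> (\<forall>a\<in>A. \<forall>b\<in>A. a - b \<in> A)"

definition right_ideal :: "'a::ring set \<Rightarrow> bool" where
  "right_ideal J \<longleftrightarrow> add_subgroup J \<and> (\<forall>a\<in>J. \<forall>r. a * r \<in> J)"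

definition left_ideal :: "'a::ring set \<Rightarrow> bool" where
  "left_ideal J \<longleftrightarrow> add_subgroup J \<and> (\<forall>a\<in>J. \<forall>r. r * a \<in> J)"

definition two_sided_ideal :: "'a::ring set \<Rightarrow> bool" where
  "two_sided_ideal J \<longleftrightarrow> right_ideal J \<and> left_ideal J"

definition graded_ring_inducing :: "('s \<Rightarrow> 's \<Rightarrow> 's) \<Rightarrow> 's \<Rightarrow> ('s \<Rightarrow> 'a::ring set) \<Rightarrow> bool" where
  "graded_ring_inducing smul z Rs \<longleftrightarrow>
     (\<forall>s. smul z s = z \<and> smul s z = z) \<and>
     (\<forall>s. add_subgroup (Rs s)) \<and>
     Rs z = {0} \<and>
     (\<forall>s. s \<noteq> z \<longrightarrow> Rs s \<noteq> {0}) \<and>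
     (\<forall>x. \<exists>!f. (\<forall>s. f s \<in> Rs s) \<and> finite {s. f s \<noteq> 0} \<and> x = (\<Sum>s\<in>{s. f s \<noteq> 0}. f s)) \<and>
     (\<forall>s t a b. a \<in> Rs s \<longrightarrow> b \<in> Rs t \<longrightarrow> a * b \<in> Rs (smul s t))"

definition homog_elems :: "('s \<Rightarrow> 'a::ring set) \<Rightarrow> 'a set" where
  "homog_elems Rs = (\<Union>s. Rs s)"

definition homogeneous :: "('s \<Rightarrow> 'a::ring set) \<Rightarrow> 'a set \<Rightarrow> bool" where
  "homogeneous Rs J \<longleftrightarrow>
     (\<forall>x\<in>J. \<exists>f. (\<forall>s. f s \<in> J \<inter> Rs s) \<and> finite {s. f s \<noteq> 0} \<and> x = (\<Sum>s\<in>{s. f s \<noteq> 0}. f s))"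

definition graded_vnr :: "('s \<Rightarrow> 'a::ring set) \<Rightarrow> bool" where
  "graded_vnr Rs \<longleftrightarrow> (\<forall>x\<in>homog_elems Rs. \<exists>r. x = x * r * x)"

definition graded_semiprime :: "('s \<Rightarrow> 'a::ring set) \<Rightarrow> 'a set \<Rightarrow> bool" where
  "graded_semiprime Rs P \<longleftrightarrow> homogeneous Rs P \<and> two_sided_ideal P \<and>
     (\<forall>I n. homogeneous Rs I \<longrightarrow> two_sided_ideal I \<longrightarrow> n > 0 \<longrightarrow>
        ideal_pow I n \<subseteq> P \<longrightarrow> I \<subseteq> P)"

definition cancellative :: "('s \<Rightarrow> 's \<Rightarrow> 's) \<Rightarrow> 's \<Rightarrow> bool" where
  "cancellative smul z \<longleftrightarrow>
     (\<forall>s t u. (smul s u \<noteq> z \<and> smul s u = smul t u) \<longrightarrow> s = t) \<and>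
     (\<forall>s t u. (smul u s \<noteq> z \<and> smul u s = smul u t) \<longrightarrow> s = t)"

definition LRI_inv :: "('s \<Rightarrow> 's \<Rightarrow> 's) \<Rightarrow> 's \<Rightarrow> 's \<Rightarrow> bool" where
  "LRI_inv smul s s' \<longleftrightarrow> (\<exists>e f. smul e e = e \<and> smul f f = f \<and>
     smul e s = s \<and> smul s f = s \<and> smul f s' = s' \<and> smul s' e = s' \<and>
     smul s s' = e \<and> smul s' s = f)"

definition nearly_epsilon_strongly_graded ::
    "('s \<Rightarrow> 's \<Rightarrow> 's) \<Rightarrow> 's \<Rightarrow> ('s \<Rightarrow> 'a::ring set) \<Rightarrow> bool" where
  "nearly_epsilon_strongly_graded smul z Rs \<longleftrightarrow> cancellative smul z \<and>
     (\<forall>s. \<exists>s'. LRI_inv smul s s' \<and>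
        (\<forall>x\<in>Rs s. \<exists>\<epsilon> \<epsilon>'. \<epsilon> \<in> setmul (Rs s) (Rs s') \<and> \<epsilon>' \<in> setmul (Rs s') (Rs s) \<and>
            \<epsilon> * x = x \<and> x * \<epsilon>' = x))"

definition graded_modular :: "('s \<Rightarrow> 'a::ring set) \<Rightarrow> 'a set \<Rightarrow> bool" where
  "graded_modular Rs M \<longleftrightarrow> homogeneous Rs M \<and> right_ideal M \<and>
     (\<exists>u\<in>homog_elems Rs. \<forall>x\<in>homog_elems Rs. u * x - x \<in> M)"

definition graded_max_modular :: "('s \<Rightarrow> 'a::ring set) \<Rightarrow> 'a set \<Rightarrow> bool" where
  "graded_max_modular Rs M \<longleftrightarrow> graded_modular Rs M \<and> M \<noteq> UNIV \<and>
     (\<forall>N. homogeneous Rs N \<and> right_ideal N \<and> N \<noteq> UNIV \<and> M \<subseteq> N \<longrightarrow> N = M)"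

definition graded_jacobson :: "('s \<Rightarrow> 'a::ring set) \<Rightarrow> 'a set" where
  "graded_jacobson Rs = \<Inter> {M. graded_max_modular Rs M}"

end

theory Submission
  imports Defs
begin

text \<open>A homogeneous element x with x = x r x factors as (x r) x and as x (r x), so every
  homogeneous one-sided ideal is idempotent; hence powers of homogeneous ideals never
  shrink, which gives graded semiprimeness.

  For the radical, take a nonzero homogeneous a \<in> R_s with a = a r a. By cancellativity
  only the component of r of degree s^{-1} contributes to the degree-s part of a r a, so
  a = a b a with b \<in> R_{s^{-1}}. Then u = a b is a homogeneous idempotent with u a = a, and
  left multiplication by u preserves degrees. Thus {y - u y} is a homogeneous right ideal,
  modular with unit u and not containing u; by Zorn it lies in a graded maximal modular
  right ideal avoiding u, which therefore cannot contain a. Only cancellativity and (LRI)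
  are used, not the epsilon elements.\<close>

lemma add_subgroup_add: "add_subgroup A \<Longrightarrow> a \<in> A \<Longrightarrow> b \<in> A \<Longrightarrow> a + b \<in> A"
  unfolding add_subgroup_def by (metis diff_0 diff_minus_eq_add)

lemma add_subgroup_sum:
  assumes "add_subgroup A" and "finite T" and "\<And>t. t \<in> T \<Longrightarrow> g t \<in> A"
  shows "sum g T \<in> A"
  using assms(2,3)
proof (induction T rule: finite_induct)
  case empty
  then show ?case using assms(1) by (simp add: add_subgroup_def)
next
  case (insert x F)
  then show ?case using assms(1) by (simp add: add_subgroup_add)
qed

lemma add_subgroup_add_gen: "add_subgroup (add_gen X)"
  unfolding add_subgroup_def by (auto intro: add_gen.intros)

lemma add_gen_subset: "add_subgroup A \<Longrightarrow> X \<subseteq> A \<Longrightarrow> add_gen X \<subseteq> A"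
proof
  fix x assume "add_subgroup A" "X \<subseteq> A" and "x \<in> add_gen X"
  from \<open>x \<in> add_gen X\<close> show "x \<in> A"
    using \<open>add_subgroup A\<close> \<open>X \<subseteq> A\<close>
    by (induction rule: add_gen.induct) (auto simp: add_subgroup_def)
qed

lemma setmul_subset_right_ideal: "right_ideal I \<Longrightarrow> setmul I J \<subseteq> I"
  unfolding setmul_def right_ideal_def by (rule add_gen_subset) auto

lemma setmul_subset_left_ideal: "left_ideal J \<Longrightarrow> setmul I J \<subseteq> J"
  unfolding setmul_def left_ideal_def by (rule add_gen_subset) auto

lemma homogeneous_subset_add_subgroup:
  assumes "homogeneous Rs I" and "add_subgroup A"
    and "\<And>x. x \<in> I \<Longrightarrow> x \<in> homog_elems Rs \<Longrightarrow> x \<in> A"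
  shows "I \<subseteq> A"
proof
  fix x assume "x \<in> I"
  then obtain f where f: "\<forall>s. f s \<in> I \<inter> Rs s" "finite {s. f s \<noteq> 0}"
    and x: "x = (\<Sum>s\<in>{s. f s \<noteq> 0}. f s)"
    using assms(1) unfolding homogeneous_def by blast
  have "f s \<in> A" for s
    using f(1) assms(3) unfolding homog_elems_def by blast
  then show "x \<in> A"
    unfolding x using add_subgroup_sum[OF assms(2) f(2)] by blast
qed

lemma setmul_self_right_ideal:
  assumes "graded_vnr Rs" and "homogeneous Rs I" and "right_ideal I"
  shows "setmul I I = I"
proof
  show "setmul I I \<subseteq> I" using assms(3) by (rule setmul_subset_right_ideal)
  show "I \<subseteq> setmul I I"
  proof (rule homogeneous_subset_add_subgroup[OF assms(2)])
    show "add_subgroup (setmul I I)" unfolding setmul_def by (rule add_subgroup_add_gen)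
    fix x assume "x \<in> I" and "x \<in> homog_elems Rs"
    then obtain r where "x = (x * r) * x" using assms(1) unfolding graded_vnr_def by blast
    moreover have "x * r \<in> I" using \<open>x \<in> I\<close> assms(3) unfolding right_ideal_def by blast
    ultimately show "x \<in> setmul I I"
      using \<open>x \<in> I\<close> unfolding setmul_def by (blast intro: add_gen.base)
  qed
qed

lemma setmul_self_left_ideal:
  assumes "graded_vnr Rs" and "homogeneous Rs I" and "left_ideal I"
  shows "setmul I I = I"
proof
  show "setmul I I \<subseteq> I" using assms(3) by (rule setmul_subset_left_ideal)
  show "I \<subseteq> setmul I I"
  proof (rule homogeneous_subset_add_subgroup[OF assms(2)])
    show "add_subgroup (setmul I I)" unfolding setmul_def by (rule add_subgroup_add_gen)
    fix x assume "x \<in> I" and "x \<in> homog_elems Rs"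
    then obtain r where "x = x * (r * x)"
      using assms(1) unfolding graded_vnr_def by (metis mult.assoc)
    moreover have "r * x \<in> I" using \<open>x \<in> I\<close> assms(3) unfolding left_ideal_def by blast
    ultimately show "x \<in> setmul I I"
      using \<open>x \<in> I\<close> unfolding setmul_def by (blast intro: add_gen.base)
  qed
qed

lemma ideal_pow_idem:
  assumes "setmul I I = I" and "n > 0"
  shows "ideal_pow I n = I"
proof -
  have "ideal_pow I (Suc m) = I" for m
    by (induction m) (simp_all add: assms(1))
  then show ?thesis using assms(2) gr0_conv_Suc by auto
qed

lemma graded_semiprime_if_graded_vnr:
  assumes "graded_vnr Rs" and "homogeneous Rs P" and "two_sided_ideal P"
  shows "graded_semiprime Rs P"
  unfolding graded_semiprime_def
proof (intro conjI allI impI)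
  fix I and n :: nat
  assume "homogeneous Rs I" "two_sided_ideal I" "n > 0" "ideal_pow I n \<subseteq> P"
  moreover have "setmul I I = I"
    using setmul_self_right_ideal[OF assms(1)] \<open>homogeneous Rs I\<close> \<open>two_sided_ideal I\<close>
    unfolding two_sided_ideal_def by blast
  ultimately show "I \<subseteq> P" using ideal_pow_idem by metis
qed (use assms in auto)

lemma right_ideal_range_diff_left_mult: "right_ideal (range (\<lambda>y. y - u * y))"
  unfolding right_ideal_def add_subgroup_def
proof (intro conjI ballI allI)
  show "0 \<in> range (\<lambda>y. y - u * y)" by (rule range_eqI[of _ _ 0]) simp
next
  fix p q assume "p \<in> range (\<lambda>y. y - u * y)" "q \<in> range (\<lambda>y. y - u * y)"
  then obtain y1 y2 where "p = y1 - u * y1" "q = y2 - u * y2" by blast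
  then have "p - q = (y1 - y2) - u * (y1 - y2)" by (simp add: algebra_simps)
  then show "p - q \<in> range (\<lambda>y. y - u * y)" by blast
next
  fix p c assume "p \<in> range (\<lambda>y. y - u * y)"
  then obtain y where "p = y - u * y" by blast
  then have "p * c = y * c - u * (y * c)" by (simp add: left_diff_distrib mult.assoc)
  then show "p * c \<in> range (\<lambda>y. y - u * y)" by blast
qed

lemma idempotent_notin_range_diff_left_mult:
  fixes u :: "'a::ring"
  assumes "u * u = u" and "u \<noteq> 0"
  shows "u \<notin> range (\<lambda>y. y - u * y)"
proof
  assume "u \<in> range (\<lambda>y. y - u * y)"
  then obtain y where "u = y - u * y" by blast
  have "u = u * u" using assms(1) by simp
  also have "\<dots> = u * (y - u * y)" using \<open>u = y - u * y\<close> by (rule arg_cong)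
  also have "\<dots> = u * y - (u * u) * y" by (simp add: right_diff_distrib mult.assoc)
  also have "\<dots> = 0" using assms(1) by simp
  finally show False using assms(2) by simp
qed

lemma homogeneous_Union:
  assumes "\<And>N. N \<in> C \<Longrightarrow> homogeneous Rs N"
  shows "homogeneous Rs (\<Union>C)"
  unfolding homogeneous_def
proof
  fix x assume "x \<in> \<Union>C"
  then obtain N where "N \<in> C" and "x \<in> N" by blast
  then obtain f where "\<forall>s. f s \<in> N \<inter> Rs s" "finite {s. f s \<noteq> 0}"
    and "x = (\<Sum>s\<in>{s. f s \<noteq> 0}. f s)"
    using assms unfolding homogeneous_def by blast
  then show "\<exists>f. (\<forall>s. f s \<in> \<Union>C \<inter> Rs s) \<and> finite {s. f s \<noteq> 0} \<and> x = (\<Sum>s\<in>{s. f s \<noteq> 0}. f s)"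
    using \<open>N \<in> C\<close> by blast
qed

lemma right_ideal_chain_Union:
  assumes "C \<noteq> {}" and "\<And>N. N \<in> C \<Longrightarrow> right_ideal N"
    and chain: "\<And>A B. A \<in> C \<Longrightarrow> B \<in> C \<Longrightarrow> A \<subseteq> B \<or> B \<subseteq> A"
  shows "right_ideal (\<Union>C)"
  unfolding right_ideal_def add_subgroup_def
proof (intro conjI ballI allI)
  show "0 \<in> \<Union>C" using assms(1,2) unfolding right_ideal_def add_subgroup_def by blast
next
  fix p q assume "p \<in> \<Union>C" "q \<in> \<Union>C"
  then obtain A B where "A \<in> C" "B \<in> C" "p \<in> A" "q \<in> B" by blast
  then show "p - q \<in> \<Union>C"
    using chain[of A B] assms(2) unfolding right_ideal_def add_subgroup_def by blast
next
  fix p c assume "p \<in> \<Union>C"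
  then show "p * c \<in> \<Union>C" using assms(2) unfolding right_ideal_def by blast
qed

lemma exists_graded_max_modular_avoiding:
  assumes "u \<in> homog_elems Rs" and "homogeneous Rs M0" and "right_ideal M0" and "u \<notin> M0"
    and modular: "\<And>y. u * y - y \<in> M0"
  shows "\<exists>M. graded_max_modular Rs M \<and> u \<notin> M"
proof -
  define F where "F = {N. homogeneous Rs N \<and> right_ideal N \<and> M0 \<subseteq> N \<and> u \<notin> N}"
  have "\<exists>M\<in>F. \<forall>N\<in>F. M \<subseteq> N \<longrightarrow> N = M"
  proof (rule subset_Zorn_nonempty)
    show "F \<noteq> {}" using assms(2-4) unfolding F_def by blast
    fix C assume "C \<noteq> {}" and "subset.chain F C"
    then have "C \<subseteq> F" and "\<forall>A\<in>C. \<forall>B\<in>C. A \<subseteq> B \<or> B \<subseteq> A"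
      by (auto simp: subset_chain_def)
    then show "\<Union>C \<in> F"
      using \<open>C \<noteq> {}\<close> homogeneous_Union[of C Rs] right_ideal_chain_Union[of C]
      unfolding F_def by blast
  qed
  then obtain M where "M \<in> F" and maximal: "\<forall>N\<in>F. M \<subseteq> N \<longrightarrow> N = M" by blast
  have "graded_max_modular Rs M"
    unfolding graded_max_modular_def graded_modular_def
  proof (intro conjI allI impI)
    show "homogeneous Rs M" "right_ideal M" "M \<noteq> UNIV" using \<open>M \<in> F\<close> unfolding F_def by auto
    show "\<exists>u\<in>homog_elems Rs. \<forall>x\<in>homog_elems Rs. u * x - x \<in> M"
      using assms(1) modular \<open>M \<in> F\<close> unfolding F_def by blast
  next
    fix N assume N: "homogeneous Rs N \<and> right_ideal N \<and> N \<noteq> UNIV \<and> M \<subseteq> N"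
    have "u \<notin> N"
    proof
      assume "u \<in> N"
      have "y \<in> N" for y
      proof -
        have "u * y \<in> N" and "u * y - y \<in> N"
          using \<open>u \<in> N\<close> modular \<open>M \<in> F\<close> N unfolding F_def right_ideal_def by blast+
        then have "u * y - (u * y - y) \<in> N"
          using N unfolding right_ideal_def add_subgroup_def by blast
        then show ?thesis by simp
      qed
      then show False using N by blast
    qed
    then have "N \<in> F" using N \<open>M \<in> F\<close> unfolding F_def by blast
    then show "N = M" using maximal N by blast
  qed
  then show ?thesis using \<open>M \<in> F\<close> unfolding F_def by blast
qed

locale graded_ring =
  fixes smul :: "'s \<Rightarrow> 's \<Rightarrow> 's" and z :: 's and Rs :: "'s \<Rightarrow> 'a::ring set"
  assumes graded_ring_inducing: "graded_ring_inducing smul z Rs"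
begin

lemma add_subgroup_Rs: "add_subgroup (Rs s)"
  using graded_ring_inducing unfolding graded_ring_inducing_def by blast

lemma Rs_z: "Rs z = {0}"
  using graded_ring_inducing unfolding graded_ring_inducing_def by blast

lemma mult_mem_Rs: "a \<in> Rs s \<Longrightarrow> b \<in> Rs t \<Longrightarrow> a * b \<in> Rs (smul s t)"
  using graded_ring_inducing unfolding graded_ring_inducing_def by blast

lemma smul_z_left: "smul z s = z"
  using graded_ring_inducing unfolding graded_ring_inducing_def by blast

lemma unique_decomposition:
  "\<exists>!f. (\<forall>s. f s \<in> Rs s) \<and> finite {s. f s \<noteq> 0} \<and> x = (\<Sum>s\<in>{s. f s \<noteq> 0}. f s)"
  using graded_ring_inducing unfolding graded_ring_inducing_def by blast

lemma zero_mem_Rs: "0 \<in> Rs s"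
  using add_subgroup_Rs[of s] by (simp add: add_subgroup_def)

definition component :: "'a \<Rightarrow> 's \<Rightarrow> 'a" where
  "component x = (THE f. (\<forall>s. f s \<in> Rs s) \<and> finite {s. f s \<noteq> 0} \<and>
     x = (\<Sum>s\<in>{s. f s \<noteq> 0}. f s))"

lemma component_props:
  "(\<forall>s. component x s \<in> Rs s) \<and> finite {s. component x s \<noteq> 0} \<and>
   x = (\<Sum>s\<in>{s. component x s \<noteq> 0}. component x s)"
  unfolding component_def by (rule theI'[OF unique_decomposition])

lemma component_mem: "component x s \<in> Rs s"
  using component_props by blast

lemma finite_support_component: "finite {s. component x s \<noteq> 0}"
  using component_props by blast

lemma sum_component:
  assumes "finite A" and "{s. component x s \<noteq> 0} \<subseteq> A"
  shows "sum (component x) A = x"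
proof -
  have "sum (component x) A = sum (component x) {s. component x s \<noteq> 0}"
    by (rule sum.mono_neutral_right) (use assms in auto)
  then show ?thesis using component_props[of x] by simp
qed

lemma component_unique:
  assumes "\<And>t. f t \<in> Rs t" and "finite A" and "\<And>t. t \<notin> A \<Longrightarrow> f t = 0" and "x = sum f A"
  shows "component x = f"
proof -
  have support: "{t. f t \<noteq> 0} \<subseteq> A" using assms(3) by blast
  then have "finite {t. f t \<noteq> 0}" using assms(2) finite_subset by blast
  moreover have "sum f A = sum f {t. f t \<noteq> 0}"
    by (rule sum.mono_neutral_right) (use assms(2) support in auto)
  ultimately have "(\<forall>s. f s \<in> Rs s) \<and> finite {s. f s \<noteq> 0} \<and> x = (\<Sum>s\<in>{s. f s \<noteq> 0}. f s)"
    using assms(1,4) by simp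
  then show ?thesis unfolding component_def by (rule the1_equality[OF unique_decomposition])
qed

lemma component_add: "component (x + y) s = component x s + component y s"
proof -
  let ?A = "{t. component x t \<noteq> 0} \<union> {t. component y t \<noteq> 0}"
  have "component (x + y) = (\<lambda>t. component x t + component y t)"
  proof (rule component_unique)
    show "component x t + component y t \<in> Rs t" for t
      using component_mem add_subgroup_add add_subgroup_Rs by blast
    show "finite ?A" using finite_support_component by blast
    show "x + y = (\<Sum>t\<in>?A. component x t + component y t)"
      using sum_component[of ?A x] sum_component[of ?A y] finite_support_component
      by (simp add: sum.distrib)
  qed auto
  then show ?thesis by simp
qed

lemma component_zero: "component 0 s = 0"
proof -
  have "component 0 = (\<lambda>t. 0)" by (rule component_unique) (auto simp: zero_mem_Rs)
  then show ?thesis by simp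
qed

lemma component_sum: "finite T \<Longrightarrow> component (sum g T) s = (\<Sum>t\<in>T. component (g t) s)"
  by (induction T rule: finite_induct) (simp_all add: component_zero component_add)

lemma component_homogeneous:
  assumes "y \<in> Rs \<sigma>"
  shows "component y s = (if s = \<sigma> then y else 0)"
proof -
  have "component y = (\<lambda>t. if t = \<sigma> then y else 0)"
    by (rule component_unique[where A="{\<sigma>}"]) (auto simp: assms zero_mem_Rs)
  then show ?thesis by simp
qed

lemma degree_unique: "x \<in> Rs s \<Longrightarrow> x \<in> Rs t \<Longrightarrow> x \<noteq> 0 \<Longrightarrow> s = t"
  using component_homogeneous[of x s s] component_homogeneous[of x t s] by metis

lemma exists_component_nonzero:
  assumes "x \<noteq> 0"
  shows "\<exists>s. component x s \<noteq> 0"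
proof (rule ccontr)
  assume "\<not> ?thesis"
  then have "{s. component x s \<noteq> 0} = {}" by simp
  then show False using component_props[of x] assms by simp
qed

lemma component_mem_homogeneous: "homogeneous Rs J \<Longrightarrow> x \<in> J \<Longrightarrow> component x s \<in> J"
proof -
  assume "homogeneous Rs J" and "x \<in> J"
  then obtain f where f: "\<forall>s. f s \<in> J \<inter> Rs s" "finite {s. f s \<noteq> 0}"
    and "x = (\<Sum>s\<in>{s. f s \<noteq> 0}. f s)"
    unfolding homogeneous_def by blast
  then have "component x = f"
    by (intro component_unique[where A="{s. f s \<noteq> 0}"]) auto
  then show ?thesis using f by auto
qed

lemma homogeneousI:
  assumes "0 \<in> J"
    and "\<And>x. x \<in> J \<Longrightarrow> \<exists>f A. finite A \<and> (\<forall>s\<in>A. f s \<in> J \<inter> Rs s) \<and> x = sum f A"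
  shows "homogeneous Rs J"
  unfolding homogeneous_def
proof
  fix x assume "x \<in> J"
  then obtain f A where A: "finite A" "\<forall>s\<in>A. f s \<in> J \<inter> Rs s" and x: "x = sum f A"
    using assms(2) by blast
  define g where "g s = (if s \<in> A then f s else 0)" for s
  have support: "{s. g s \<noteq> 0} \<subseteq> A" unfolding g_def by auto
  have "\<forall>s. g s \<in> J \<inter> Rs s" using A(2) assms(1) zero_mem_Rs unfolding g_def by auto
  moreover have "finite {s. g s \<noteq> 0}" using A(1) support finite_subset by blast
  moreover have "x = (\<Sum>s\<in>{s. g s \<noteq> 0}. g s)"
  proof -
    have "(\<Sum>s\<in>{s. g s \<noteq> 0}. g s) = sum g A"
      by (rule sum.mono_neutral_left) (use A(1) support in auto)
    also have "\<dots> = x" unfolding x g_def by simp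
    finally show ?thesis by simp
  qed
  ultimately show "\<exists>f. (\<forall>s. f s \<in> J \<inter> Rs s) \<and> finite {s. f s \<noteq> 0} \<and> x = (\<Sum>s\<in>{s. f s \<noteq> 0}. f s)"
    by blast
qed

lemma homogeneous_range:
  assumes add: "\<And>x y. \<phi> (x + y) = \<phi> x + \<phi> y"
    and degree: "\<And>x t. x \<in> Rs t \<Longrightarrow> \<phi> x \<in> Rs t"
  shows "homogeneous Rs (range \<phi>)"
proof (rule homogeneousI)
  have "\<phi> 0 = 0" using add[of 0 0] by simp
  then show "0 \<in> range \<phi>" using rangeI[of \<phi> 0] by simp
  fix w assume "w \<in> range \<phi>"
  then obtain y where "w = \<phi> y" by blast
  let ?A = "{t. component y t \<noteq> 0}"
  have "sum (component y) ?A = y"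
    by (rule sum_component[OF finite_support_component subset_refl])
  then have "w = \<phi> (sum (component y) ?A)" using \<open>w = \<phi> y\<close> by simp
  also have "\<dots> = (\<Sum>t\<in>?A. \<phi> (component y t))"
    using sum_comp_morphism[of \<phi> "component y" ?A, OF \<open>\<phi> 0 = 0\<close> add] by (simp add: o_def)
  finally have "w = (\<Sum>t\<in>?A. \<phi> (component y t))" .
  moreover have "\<phi> (component y t) \<in> range \<phi> \<inter> Rs t" for t
    using degree[OF component_mem] by blast
  ultimately show "\<exists>f A. finite A \<and> (\<forall>s\<in>A. f s \<in> range \<phi> \<inter> Rs s) \<and> w = sum f A"
    using finite_support_component[of y]
    by (intro exI[of _ "\<lambda>t. \<phi> (component y t)"] exI[of _ ?A]) simp
qed

lemma left_mult_idempotent_preserves_degree: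
  assumes "cancellative smul z" and "u \<in> Rs e" and "u * u = u" and "y \<in> Rs t"
  shows "u * y \<in> Rs t"
proof (cases "u * y = 0")
  case True
  then show ?thesis using zero_mem_Rs by simp
next
  case False
  have deg: "u * y \<in> Rs (smul e t)" using mult_mem_Rs[OF assms(2,4)] .
  have "u * y = u * (u * y)" using assms(3) by (metis mult.assoc)
  then have "u * y \<in> Rs (smul e (smul e t))" using mult_mem_Rs[OF assms(2) deg] by simp
  then have "smul e (smul e t) = smul e t" using degree_unique deg False by blast
  moreover have "smul e t \<noteq> z" using deg False Rs_z by auto
  ultimately have "smul e t = t" using assms(1) unfolding cancellative_def by metis
  then show ?thesis using deg by simp
qed

lemma homogeneous_quasi_inverse:
  assumes "cancellative smul z" and "LRI_inv smul s s'" and "a \<in> Rs s" and "a = a * r * a"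
  shows "a = a * component r s' * a"
proof (cases "a = 0")
  case True
  then show ?thesis by simp
next
  case False
  then have "s \<noteq> z" using assms(3) Rs_z by auto
  obtain e where es: "smul e s = s" and ss': "smul s s' = e"
    using assms(2) unfolding LRI_inv_def by blast
  have "e \<noteq> z" using es \<open>s \<noteq> z\<close> smul_z_left by metis
  have sandwich: "component (a * y * a) s = (if t = s' then a * y * a else 0)" if "y \<in> Rs t" for y t
  proof -
    have deg: "a * y * a \<in> Rs (smul (smul s t) s)"
      using mult_mem_Rs[OF mult_mem_Rs[OF assms(3) that] assms(3)] .
    have "smul (smul s t) s = s \<longleftrightarrow> t = s'"
    proof
      assume "smul (smul s t) s = s"
      then have "smul s t = e" using assms(1) es \<open>s \<noteq> z\<close> unfolding cancellative_def by metis
      then show "t = s'" using assms(1) ss' \<open>e \<noteq> z\<close> unfolding cancellative_def by metis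
    qed (use es ss' in simp)
    then show ?thesis using component_homogeneous[OF deg] by auto
  qed
  define T where "T = {t. component r t \<noteq> 0}"
  have "finite T" unfolding T_def by (rule finite_support_component)
  have "r = (\<Sum>t\<in>T. component r t)"
    using sum_component[of T r] finite_support_component unfolding T_def by simp
  then have "a * r * a = (\<Sum>t\<in>T. a * component r t * a)"
    by (metis sum_distrib_left sum_distrib_right)
  then have "a = component (\<Sum>t\<in>T. a * component r t * a) s"
    using assms(3,4) component_homogeneous by simp
  also have "\<dots> = (\<Sum>t\<in>T. component (a * component r t * a) s)"
    by (rule component_sum[OF \<open>finite T\<close>])
  also have "\<dots> = (\<Sum>t\<in>T. if t = s' then a * component r t * a else 0)"
    by (intro sum.cong refl) (rule sandwich[OF component_mem])
  also have "\<dots> = a * component r s' * a"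
    using \<open>finite T\<close> by (simp add: T_def)
  finally show ?thesis .
qed

lemma obtain_homogeneous_idempotent_left_unit:
  assumes "nearly_epsilon_strongly_graded smul z Rs" and "graded_vnr Rs" and "a \<in> Rs s"
  obtains b e where "a * b \<in> Rs e" and "a * b * (a * b) = a * b" and "a * b * a = a"
proof -
  obtain s' where "LRI_inv smul s s'"
    using assms(1) unfolding nearly_epsilon_strongly_graded_def by blast
  obtain r where "a = a * r * a"
    using assms(2,3) unfolding graded_vnr_def homog_elems_def by blast
  then have aba: "a * component r s' * a = a"
    using homogeneous_quasi_inverse \<open>LRI_inv smul s s'\<close> assms(1,3)
    unfolding nearly_epsilon_strongly_graded_def by metis
  show ?thesis
  proof
    show "a * component r s' \<in> Rs (smul s s')" using mult_mem_Rs[OF assms(3) component_mem] .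
    show "a * component r s' * (a * component r s') = a * component r s'"
      using aba by (metis mult.assoc)
  qed (rule aba)
qed

theorem graded_jacobson_eq_zero:
  assumes "nearly_epsilon_strongly_graded smul z Rs" and "graded_vnr Rs"
  shows "graded_jacobson Rs = {0}"
proof
  show "{0} \<subseteq> graded_jacobson Rs"
    unfolding graded_jacobson_def graded_max_modular_def graded_modular_def
      right_ideal_def add_subgroup_def
    by blast
  show "graded_jacobson Rs \<subseteq> {0}"
  proof (rule subsetI, rule ccontr)
    fix x assume "x \<in> graded_jacobson Rs" and "x \<notin> {0}"
    then obtain s where "component x s \<noteq> 0" using exists_component_nonzero by auto
    define a where "a = component x s"
    have "a \<in> Rs s" unfolding a_def by (rule component_mem)
    then obtain b e where "a * b \<in> Rs e" and "a * b * (a * b) = a * b" and "a * b * a = a"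
      using obtain_homogeneous_idempotent_left_unit assms by blast
    define u where "u = a * b"
    have "u \<in> Rs e" and idem: "u * u = u" and "u * a = a"
      using \<open>a * b \<in> Rs e\<close> \<open>a * b * (a * b) = a * b\<close> \<open>a * b * a = a\<close> unfolding u_def by simp_all
    have "u \<noteq> 0" using \<open>u * a = a\<close> \<open>component x s \<noteq> 0\<close> unfolding a_def by auto
    have "cancellative smul z" using assms(1) unfolding nearly_epsilon_strongly_graded_def by blast
    define M0 where "M0 = range (\<lambda>y. y - u * y)"
    have "homogeneous Rs M0"
      unfolding M0_def
    proof (rule homogeneous_range)
      show "x + y - u * (x + y) = (x - u * x) + (y - u * y)" for x y
        by (simp add: algebra_simps)
      fix y t assume "y \<in> Rs t"
      moreover have "u * y \<in> Rs t"
        using left_mult_idempotent_preserves_degree[OF \<open>cancellative smul z\<close> \<open>u \<in> Rs e\<close> idem \<open>y \<in> Rs t\<close>] .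
      ultimately show "y - u * y \<in> Rs t" using add_subgroup_Rs[of t] unfolding add_subgroup_def by blast
    qed
    moreover have "right_ideal M0" unfolding M0_def by (rule right_ideal_range_diff_left_mult)
    moreover have "u \<notin> M0" unfolding M0_def using idem \<open>u \<noteq> 0\<close> by (rule idempotent_notin_range_diff_left_mult)
    moreover have "u * y - y \<in> M0" for y
    proof -
      have "u * y - y = (- y) - u * (- y)" by simp
      then show ?thesis unfolding M0_def by blast
    qed
    moreover have "u \<in> homog_elems Rs" using \<open>u \<in> Rs e\<close> unfolding homog_elems_def by blast
    ultimately obtain M where "graded_max_modular Rs M" and "u \<notin> M"
      using exists_graded_max_modular_avoiding by blast
    then have "a \<in> M"
      using \<open>x \<in> graded_jacobson Rs\<close> component_mem_homogeneous
      unfolding a_def graded_jacobson_def graded_max_modular_def graded_modular_def by blast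
    then have "u \<in> M"
      using \<open>graded_max_modular Rs M\<close>
      unfolding u_def graded_max_modular_def graded_modular_def right_ideal_def by blast
    then show False using \<open>u \<notin> M\<close> by blast
  qed
qed

end

theorem proposition4p9:
  fixes smul :: "'s \<Rightarrow> 's \<Rightarrow> 's" and z :: 's and Rs :: "'s \<Rightarrow> 'a::ring set"
  assumes "graded_ring_inducing smul z Rs" and "graded_vnr Rs"
  shows "(\<forall>I. homogeneous Rs I \<and> right_ideal I \<longrightarrow> setmul I I = I)
       \<and> (\<forall>I. homogeneous Rs I \<and> left_ideal I \<longrightarrow> setmul I I = I)
       \<and> (\<forall>P. homogeneous Rs P \<and> two_sided_ideal P \<longrightarrow> graded_semiprime Rs P)
       \<and> (nearly_epsilon_strongly_graded smul z Rs \<longrightarrow> graded_jacobson Rs = {0})"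
proof -
  interpret graded_ring smul z Rs using assms(1) by (rule graded_ring.intro)
  show ?thesis
  proof (intro conjI allI impI)
    show "setmul I I = I" if "homogeneous Rs I \<and> right_ideal I" for I
      using setmul_self_right_ideal[OF assms(2)] that by blast
    show "setmul I I = I" if "homogeneous Rs I \<and> left_ideal I" for I
      using setmul_self_left_ideal[OF assms(2)] that by blast
    show "graded_semiprime Rs P" if "homogeneous Rs P \<and> two_sided_ideal P" for P
      using graded_semiprime_if_graded_vnr[OF assms(2)] that by blast
    show "graded_jacobson Rs = {0}" if "nearly_epsilon_strongly_graded smul z Rs"
      using graded_jacobson_eq_zero[OF that assms(2)] .
  qed
qed

end
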